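(* Let $(\Omega, \Sigma, \mu)$ be a nonatomic measure space with $0 < \mu(\Omega) < \infty$, let $1 \le p < \infty$, $X = L^p(\mu)$, let $Y$ be a Banach space, let $g \in L^\infty(\mu)$, and let $T \in \mathcal{B}(X, Y)$ be a narrow operator. Then the operator $T g I \in \mathcal{B}(X, Y)$, $f \mapsto T(gf)$, is also narrow.
   Context: $\mathcal{B}(X,Y)$ denotes the bounded linear operators from $X$ to $Y$. A $\Sigma$-measurable function $h$ is a sign on $A \in \Sigma$ if $h$ takes values in $\{-1,0,1\}$ and $h^2 = \mathbb{I}_A$ (indicator of $A$); it is of mean zero if $\int_\Omega h\,d\mu = 0$. An operator $S \in \mathcal{B}(L^p(\mu), Y)$ is narrow if for every $A \in \Sigma$ with $\mu(A) > 0$ and every $\varepsilon > 0$ there exists a mean zero sign $h$ on $A$ with $\|Sh\| < \varepsilon$. *)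

theory Defs
  imports "HOL-Analysis.Analysis"
begin

text \<open>Real L^p(M), 1 <= p < infinity, represented by measurable functions with
  integrable p-th power (elements equal a.e. are identified through the seminorm).\<close>
definition Lp_space :: "'a measure \<Rightarrow> real \<Rightarrow> ('a \<Rightarrow> real) set" where
  "Lp_space M p = {f. f \<in> borel_measurable M \<and> integrable M (\<lambda>x. \<bar>f x\<bar> powr p)}"

definition Lp_norm :: "'a measure \<Rightarrow> real \<Rightarrow> ('a \<Rightarrow> real) \<Rightarrow> real" where
  "Lp_norm M p f = (\<integral>x. \<bar>f x\<bar> powr p \<partial>M) powr (1 / p)"

definition Linf_space :: "'a measure \<Rightarrow> ('a \<Rightarrow> real) set" where
  "Linf_space M = {g. g \<in> borel_measurable M \<and> (\<exists>C. AE x in M. \<bar>g x\<bar> \<le> C)}"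

definition bounded_Lp_op :: "'a measure \<Rightarrow> real \<Rightarrow> (('a \<Rightarrow> real) \<Rightarrow> 'b::real_normed_vector) \<Rightarrow> bool" where
  "bounded_Lp_op M p T \<longleftrightarrow>
     (\<forall>f\<in>Lp_space M p. \<forall>g\<in>Lp_space M p. \<forall>a b::real.
         T (\<lambda>x. a * f x + b * g x) = a *\<^sub>R T f + b *\<^sub>R T g) \<and>
     (\<exists>C. \<forall>f\<in>Lp_space M p. norm (T f) \<le> C * Lp_norm M p f)"

definition nonatomic :: "'a measure \<Rightarrow> bool" where
  "nonatomic M \<longleftrightarrow> (\<forall>A\<in>sets M. 0 < emeasure M A \<longrightarrow>
      (\<exists>B\<in>sets M. B \<subseteq> A \<and> 0 < emeasure M B \<and> emeasure M B < emeasure M A))"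

definition is_sign :: "'a measure \<Rightarrow> ('a \<Rightarrow> real) \<Rightarrow> 'a set \<Rightarrow> bool" where
  "is_sign M h A \<longleftrightarrow> h \<in> borel_measurable M \<and>
     (\<forall>x\<in>space M. h x \<in> {-1, 0, 1} \<and> (h x)\<^sup>2 = indicator A x)"

definition mean_zero :: "'a measure \<Rightarrow> ('a \<Rightarrow> real) \<Rightarrow> bool" where
  "mean_zero M h \<longleftrightarrow> (\<integral>x. h x \<partial>M) = 0"

definition narrow :: "'a measure \<Rightarrow> real \<Rightarrow> (('a \<Rightarrow> real) \<Rightarrow> 'b::real_normed_vector) \<Rightarrow> bool" where
  "narrow M p S \<longleftrightarrow> bounded_Lp_op M p S \<and>
     (\<forall>A\<in>sets M. 0 < emeasure M A \<longrightarrow> (\<forall>\<epsilon>>0. \<exists>h. is_sign M h A \<and> mean_zero M h \<and> norm (S h) < \<epsilon>))"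

end

theory Submission
  imports Defs
begin

text \<open>Off a null set, g is uniformly \<delta>-close to a function \<phi> with finitely many values.
  For such \<phi> the operator f \<mapsto> T (\<phi> f) is narrow: split A into the level sets
  A_c = A \<inter> {\<phi> = c}, choose on each a mean zero sign h_c with T h_c small
  (narrowness of T; on a null level set its indicator is such a sign), and let h = \<Sum> h_c,
  so that T (\<phi> h) = \<Sum> c T h_c. The remainder T ((g - \<phi>) h) is small because
  \<bar>(g - \<phi>) h\<bar> \<le> \<delta> and T is bounded on L^p of a finite measure.\<close>

lemma Lp_norm_nonneg: "0 \<le> Lp_norm M p f"
  unfolding Lp_norm_def by simp

lemma Lp_space_AE_bounded:
  assumes "finite_measure M" "0 \<le> p" "f \<in> borel_measurable M" "AE x in M. \<bar>f x\<bar> \<le> B"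
  shows "f \<in> Lp_space M p"
proof -
  have "AE x in M. \<bar>f x\<bar> powr p \<le> \<bar>B\<bar> powr p"
    using assms(4) by eventually_elim (use assms(2) in \<open>auto intro: powr_mono2\<close>)
  then have "integrable M (\<lambda>x. \<bar>f x\<bar> powr p)"
    using assms(3) by (intro finite_measure.integrable_const_bound[OF assms(1)]) auto
  then show ?thesis
    using assms(3) unfolding Lp_space_def by auto
qed

lemma Lp_norm_AE_bounded_le:
  assumes "finite_measure M" "0 < p" "f \<in> borel_measurable M" "AE x in M. \<bar>f x\<bar> \<le> B" "0 \<le> B"
  shows "Lp_norm M p f \<le> B * measure M (space M) powr (1 / p)"
proof -
  have bound: "AE x in M. \<bar>f x\<bar> powr p \<le> B powr p"
    using assms(4) by eventually_elim (use assms(2) in \<open>auto intro: powr_mono2\<close>)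
  have "integrable M (\<lambda>x. \<bar>f x\<bar> powr p)"
    using Lp_space_AE_bounded[OF assms(1) _ assms(3,4)] assms(2) unfolding Lp_space_def by auto
  then have "(\<integral>x. \<bar>f x\<bar> powr p \<partial>M) \<le> (\<integral>x. B powr p \<partial>M)"
    using bound finite_measure.integrable_const[OF assms(1)] by (intro integral_mono_AE) auto
  then have "Lp_norm M p f \<le> (B powr p * measure M (space M)) powr (1 / p)"
    unfolding Lp_norm_def using assms(2) by (intro powr_mono2) (auto simp: mult.commute)
  also have "\<dots> = B * measure M (space M) powr (1 / p)"
    using assms(2,5) by (simp add: powr_mult powr_powr)
  finally show ?thesis .
qed

lemma Lp_space_mult_AE_bounded:
  assumes "0 < p" "g \<in> borel_measurable M" "AE x in M. \<bar>g x\<bar> \<le> K" "f \<in> Lp_space M p"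
  shows "(\<lambda>x. g x * f x) \<in> Lp_space M p"
    and "Lp_norm M p (\<lambda>x. g x * f x) \<le> \<bar>K\<bar> * Lp_norm M p f"
proof -
  have f: "f \<in> borel_measurable M" "integrable M (\<lambda>x. \<bar>f x\<bar> powr p)"
    using assms(4) unfolding Lp_space_def by auto
  have bound: "AE x in M. \<bar>g x * f x\<bar> powr p \<le> \<bar>K\<bar> powr p * \<bar>f x\<bar> powr p"
  proof (use assms(3) in eventually_elim)
    case (elim x)
    then have "\<bar>g x\<bar> powr p \<le> \<bar>K\<bar> powr p"
      using assms(1) by (intro powr_mono2) auto
    then show ?case
      by (simp add: abs_mult powr_mult mult_right_mono)
  qed
  have int: "integrable M (\<lambda>x. \<bar>g x * f x\<bar> powr p)"
    using bound f assms(2)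
    by (intro Bochner_Integration.integrable_bound[OF integrable_mult_right[OF f(2), of "\<bar>K\<bar> powr p"]])
      auto
  then show "(\<lambda>x. g x * f x) \<in> Lp_space M p"
    using f assms(2) unfolding Lp_space_def by auto
  have "(\<integral>x. \<bar>g x * f x\<bar> powr p \<partial>M) \<le> \<bar>K\<bar> powr p * (\<integral>x. \<bar>f x\<bar> powr p \<partial>M)"
    using integral_mono_AE[OF int _ bound] f by simp
  then have "Lp_norm M p (\<lambda>x. g x * f x) \<le> (\<bar>K\<bar> powr p * (\<integral>x. \<bar>f x\<bar> powr p \<partial>M)) powr (1 / p)"
    unfolding Lp_norm_def using assms(1) by (intro powr_mono2) auto
  also have "\<dots> = \<bar>K\<bar> * Lp_norm M p f"
    using assms(1) unfolding Lp_norm_def by (simp add: powr_mult powr_powr)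
  finally show "Lp_norm M p (\<lambda>x. g x * f x) \<le> \<bar>K\<bar> * Lp_norm M p f" .
qed

lemma Lp_space_cong_AE:
  assumes "f \<in> Lp_space M p" "g \<in> borel_measurable M" "AE x in M. f x = g x"
  shows "g \<in> Lp_space M p"
proof -
  have "integrable M (\<lambda>x. \<bar>f x\<bar> powr p) = integrable M (\<lambda>x. \<bar>g x\<bar> powr p)"
    using assms unfolding Lp_space_def by (intro integrable_cong_AE) auto
  then show ?thesis
    using assms unfolding Lp_space_def by auto
qed

lemma bounded_Lp_op_linear:
  assumes "bounded_Lp_op M p T" "f \<in> Lp_space M p" "g \<in> Lp_space M p"
  shows "T (\<lambda>x. a * f x + b * g x) = a *\<^sub>R T f + b *\<^sub>R T g"
  using assms unfolding bounded_Lp_op_def by blast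

lemma bounded_Lp_op_add:
  assumes "bounded_Lp_op M p T" "f \<in> Lp_space M p" "g \<in> Lp_space M p"
  shows "T (\<lambda>x. f x + g x) = T f + T g"
  using bounded_Lp_op_linear[OF assms, of 1 1] by simp

lemma bounded_Lp_op_norm_bound:
  assumes "bounded_Lp_op M p T"
  obtains C where "0 \<le> C" "\<And>f. f \<in> Lp_space M p \<Longrightarrow> norm (T f) \<le> C * Lp_norm M p f"
proof -
  obtain C where C: "\<forall>f\<in>Lp_space M p. norm (T f) \<le> C * Lp_norm M p f"
    using assms unfolding bounded_Lp_op_def by blast
  have "norm (T f) \<le> max C 0 * Lp_norm M p f" if "f \<in> Lp_space M p" for f
    using C that mult_right_mono[OF max.cobounded1 Lp_norm_nonneg] by (meson order_trans)
  then show thesis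
    using that[of "max C 0"] by simp
qed

lemma bounded_Lp_op_AE_zero:
  assumes "finite_measure M" "0 < p" "bounded_Lp_op M p T"
    and "f \<in> borel_measurable M" "AE x in M. f x = 0"
  shows "T f = 0"
proof -
  have zero: "AE x in M. \<bar>f x\<bar> \<le> 0"
    using assms(5) by auto
  obtain C where "\<And>f. f \<in> Lp_space M p \<Longrightarrow> norm (T f) \<le> C * Lp_norm M p f"
    using bounded_Lp_op_norm_bound[OF assms(3)] by blast
  moreover have "f \<in> Lp_space M p"
    using Lp_space_AE_bounded[OF assms(1) _ assms(4) zero] assms(2) by simp
  moreover have "Lp_norm M p f = 0"
    using Lp_norm_AE_bounded_le[OF assms(1,2,4) zero order_refl] Lp_norm_nonneg[of M p f] by simp
  ultimately show ?thesis
    by fastforce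
qed

lemma bounded_Lp_op_cong_AE:
  assumes "finite_measure M" "0 < p" "bounded_Lp_op M p T"
    and "f \<in> Lp_space M p" "g \<in> borel_measurable M" "AE x in M. f x = g x"
  shows "T f = T g"
proof -
  have g: "g \<in> Lp_space M p"
    using Lp_space_cong_AE[OF assms(4-6)] .
  have "T (\<lambda>x. 1 * f x + (-1) * g x) = 0"
    using assms(4-6) unfolding Lp_space_def
    by (intro bounded_Lp_op_AE_zero[OF assms(1-3)]) auto
  then show ?thesis
    using bounded_Lp_op_linear[OF assms(3,4) g, of 1 "-1"] by simp
qed

lemma bounded_Lp_op_mult_Linf:
  assumes "0 < p" "bounded_Lp_op M p T" "g \<in> Linf_space M"
  shows "bounded_Lp_op M p (\<lambda>f. T (\<lambda>x. g x * f x))"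
proof -
  obtain K where g: "g \<in> borel_measurable M" "AE x in M. \<bar>g x\<bar> \<le> K"
    using assms(3) unfolding Linf_space_def by auto
  note mult = Lp_space_mult_AE_bounded[OF assms(1) g]
  obtain C where C: "0 \<le> C" "\<And>f. f \<in> Lp_space M p \<Longrightarrow> norm (T f) \<le> C * Lp_norm M p f"
    using bounded_Lp_op_norm_bound[OF assms(2)] by blast
  show ?thesis
    unfolding bounded_Lp_op_def
  proof (intro conjI ballI allI exI)
    fix f f' a b
    assume "f \<in> Lp_space M p" "f' \<in> Lp_space M p"
    then show "T (\<lambda>x. g x * (a * f x + b * f' x)) = a *\<^sub>R T (\<lambda>x. g x * f x) + b *\<^sub>R T (\<lambda>x. g x * f' x)"
      using bounded_Lp_op_linear[OF assms(2) mult(1) mult(1)] by (simp add: algebra_simps)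
  next
    fix f
    assume f: "f \<in> Lp_space M p"
    have "norm (T (\<lambda>x. g x * f x)) \<le> C * Lp_norm M p (\<lambda>x. g x * f x)"
      using C(2) mult(1)[OF f] .
    also have "\<dots> \<le> C * (\<bar>K\<bar> * Lp_norm M p f)"
      using mult(2)[OF f] C(1) by (rule mult_left_mono)
    finally show "norm (T (\<lambda>x. g x * f x)) \<le> C * \<bar>K\<bar> * Lp_norm M p f"
      by (simp add: mult.assoc)
  qed
qed

lemma bounded_Lp_op_uniformly_small:
  assumes "finite_measure M" "0 < p" "bounded_Lp_op M p T" "0 < \<epsilon>"
  obtains \<delta> where "0 < \<delta>"
    "\<And>f. f \<in> borel_measurable M \<Longrightarrow> AE x in M. \<bar>f x\<bar> \<le> \<delta> \<Longrightarrow> norm (T f) < \<epsilon>"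
proof -
  obtain C where C: "0 \<le> C" "\<And>f. f \<in> Lp_space M p \<Longrightarrow> norm (T f) \<le> C * Lp_norm M p f"
    using bounded_Lp_op_norm_bound[OF assms(3)] by blast
  define m where "m = measure M (space M) powr (1 / p)"
  define \<delta> where "\<delta> = \<epsilon> / ((C + 1) * (m + 1))"
  have "0 \<le> m"
    unfolding m_def by simp
  then have pos: "0 < (C + 1) * (m + 1)"
    using C(1) by simp
  then have "0 < \<delta>"
    unfolding \<delta>_def using assms(4) by simp
  have "C * m < (C + 1) * (m + 1)"
    using C(1) \<open>0 \<le> m\<close> by (simp add: algebra_simps)
  then have "C * m * \<delta> < (C + 1) * (m + 1) * \<delta>"
    using \<open>0 < \<delta>\<close> by (rule mult_strict_right_mono)
  also have "\<dots> = \<epsilon>"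
    unfolding \<delta>_def using pos by (simp only: times_divide_eq_right nonzero_mult_div_cancel_left less_irrefl)
  finally have "C * (\<delta> * m) < \<epsilon>"
    by (simp add: algebra_simps)
  moreover have "norm (T f) < \<epsilon>"
    if "f \<in> borel_measurable M" "AE x in M. \<bar>f x\<bar> \<le> \<delta>" for f
  proof -
    have "norm (T f) \<le> C * Lp_norm M p f"
      using C(2) Lp_space_AE_bounded[OF assms(1) _ that] assms(2) by simp
    also have "\<dots> \<le> C * (\<delta> * m)"
      unfolding m_def using Lp_norm_AE_bounded_le[OF assms(1,2) that] \<open>0 < \<delta>\<close> C(1)
      by (intro mult_left_mono) auto
    finally show ?thesis
      using \<open>C * (\<delta> * m) < \<epsilon>\<close> by linarith
  qed
  then show thesis
    using that \<open>0 < \<delta>\<close> by blast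
qed

lemma is_sign_measurable: "is_sign M h A \<Longrightarrow> h \<in> borel_measurable M"
  unfolding is_sign_def by simp

lemma is_sign_abs_le_1: "is_sign M h A \<Longrightarrow> x \<in> space M \<Longrightarrow> \<bar>h x\<bar> \<le> 1"
  unfolding is_sign_def by auto

lemma is_sign_abs_mult_le: "is_sign M h A \<Longrightarrow> x \<in> space M \<Longrightarrow> \<bar>a * h x\<bar> \<le> \<bar>a\<bar>"
  using is_sign_abs_le_1[of M h A x] by (simp add: abs_mult mult_right_le_one_le)

lemma is_sign_outside: "is_sign M h A \<Longrightarrow> x \<in> space M \<Longrightarrow> x \<notin> A \<Longrightarrow> h x = 0"
  unfolding is_sign_def by auto

lemma is_sign_add:
  assumes "is_sign M h1 A1" "is_sign M h2 A2" "A1 \<inter> A2 = {}"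
  shows "is_sign M (\<lambda>x. h1 x + h2 x) (A1 \<union> A2)"
proof -
  have "h1 x + h2 x \<in> {-1, 0, 1} \<and> (h1 x + h2 x)\<^sup>2 = indicator (A1 \<union> A2) x"
    if x: "x \<in> space M" for x
  proof -
    consider "x \<notin> A2" | "x \<notin> A1"
      using assms(3) by blast
    then show ?thesis
    proof cases
      case 1
      then show ?thesis
        using is_sign_outside[OF assms(2) x] assms(1) x unfolding is_sign_def indicator_def by auto
    next
      case 2
      then show ?thesis
        using is_sign_outside[OF assms(1) x] assms(2) x unfolding is_sign_def indicator_def by auto
    qed
  qed
  then show ?thesis
    using assms(1,2) unfolding is_sign_def by auto
qed

lemma is_sign_integrable:
  assumes "finite_measure M" "is_sign M h A"
  shows "integrable M h"
  using is_sign_abs_le_1[OF assms(2)] is_sign_measurable[OF assms(2)]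
  by (intro finite_measure.integrable_const_bound[OF assms(1), where B=1]) auto

lemma is_sign_Lp_space:
  assumes "finite_measure M" "0 \<le> p" "is_sign M h A"
  shows "h \<in> Lp_space M p"
  using is_sign_abs_le_1[OF assms(3)] is_sign_measurable[OF assms(3)]
  by (intro Lp_space_AE_bounded[OF assms(1,2), where B=1] AE_I2) auto

lemma mult_sign_Lp_space:
  assumes "finite_measure M" "0 \<le> p" "phi \<in> borel_measurable M" "is_sign M h A"
    and "\<And>x. x \<in> A \<Longrightarrow> \<bar>phi x\<bar> \<le> L"
  shows "(\<lambda>x. phi x * h x) \<in> Lp_space M p"
proof (rule Lp_space_AE_bounded[OF assms(1,2), where B="\<bar>L\<bar>"])
  show "(\<lambda>x. phi x * h x) \<in> borel_measurable M"
    using assms(3) is_sign_measurable[OF assms(4)] by measurable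
  have "\<bar>phi x * h x\<bar> \<le> \<bar>L\<bar>" if "x \<in> space M" for x
  proof (cases "x \<in> A")
    case True
    then show ?thesis
      using assms(5)[OF True] is_sign_abs_mult_le[OF assms(4) that, of "phi x"] by simp
  next
    case False
    then show ?thesis
      using is_sign_outside[OF assms(4) that] by simp
  qed
  then show "AE x in M. \<bar>phi x * h x\<bar> \<le> \<bar>L\<bar>"
    by (rule AE_I2)
qed

lemma mean_zero_add:
  assumes "integrable M h1" "integrable M h2" "mean_zero M h1" "mean_zero M h2"
  shows "mean_zero M (\<lambda>x. h1 x + h2 x)"
  using assms unfolding mean_zero_def by simp

lemma narrow_mean_zero_sign:
  assumes "finite_measure M" "0 < p" "narrow M p T" "A \<in> sets M" "0 < \<epsilon>"
  obtains h where "is_sign M h A" "mean_zero M h" "norm (T h) < \<epsilon>"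
proof (cases "emeasure M A = 0")
  case False
  then show ?thesis
    using assms(3-5) that unfolding narrow_def by (auto simp: zero_less_iff_neq_zero)
next
  case True
  have "is_sign M (indicator A) A"
    using assms(4) unfolding is_sign_def by (auto simp: indicator_def)
  moreover have "mean_zero M (indicator A)"
    using True sets.sets_into_space[OF assms(4)] unfolding mean_zero_def
    by (simp add: measure_def Int_absorb2)
  moreover have "T (indicator A) = 0"
    using assms(3,4) True AE_not_in[of A M]
    by (intro bounded_Lp_op_AE_zero[OF assms(1,2)]) (auto simp: narrow_def null_sets_def)
  ultimately show ?thesis
    using that assms(5) by simp
qed

lemma AE_bounded_finite_valued_approx:
  fixes g :: "'a \<Rightarrow> real"
  assumes "g \<in> borel_measurable M" "AE x in M. \<bar>g x\<bar> \<le> K" "0 < \<delta>"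
  obtains phi where "phi \<in> borel_measurable M" "finite (phi ` space M)"
    "AE x in M. \<bar>g x - phi x\<bar> \<le> \<delta>"
proof -
  define gc where "gc x = max (-K) (min K (g x))" for x
  define phi where "phi x = \<delta> * of_int \<lfloor>gc x / \<delta>\<rfloor>" for x
  have "phi \<in> borel_measurable M"
    using assms(1) unfolding phi_def gc_def by measurable
  have "phi ` space M \<subseteq> (\<lambda>k. \<delta> * of_int k) ` {\<lfloor>- \<bar>K\<bar> / \<delta>\<rfloor>..\<lfloor>\<bar>K\<bar> / \<delta>\<rfloor>}"
  proof -
    have "- \<bar>K\<bar> \<le> gc x" "gc x \<le> \<bar>K\<bar>" for x
      unfolding gc_def by auto
    then have "- \<bar>K\<bar> / \<delta> \<le> gc x / \<delta>" "gc x / \<delta> \<le> \<bar>K\<bar> / \<delta>" for x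
      using assms(3) by (intro divide_right_mono; simp)+
    then show ?thesis
      unfolding phi_def by (auto intro!: imageI floor_mono)
  qed
  then have "finite (phi ` space M)"
    by (rule finite_subset) simp
  have approx: "gc x - \<delta> < phi x" "phi x \<le> gc x" for x
  proof -
    have "\<delta> * (gc x / \<delta> - 1) < phi x" "phi x \<le> \<delta> * (gc x / \<delta>)"
      unfolding phi_def using assms(3) by (intro mult_strict_left_mono mult_left_mono; linarith)+
    then show "gc x - \<delta> < phi x" "phi x \<le> gc x"
      using assms(3) by (simp_all add: right_diff_distrib)
  qed
  have "AE x in M. \<bar>g x - phi x\<bar> \<le> \<delta>"
  proof (use assms(2) in eventually_elim)
    case (elim x)
    then have "gc x = g x"
      unfolding gc_def by auto
    then show ?case
      using approx[of x] by auto
  qed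
  then show thesis
    using that \<open>phi \<in> borel_measurable M\<close> \<open>finite (phi ` space M)\<close> by blast
qed

lemma bounded_Lp_op_mult_disjoint_signs:
  assumes "finite_measure M" "0 < p" "bounded_Lp_op M p T" "phi \<in> borel_measurable M"
    and "is_sign M h1 B1" "is_sign M h2 B2" "B1 \<inter> B2 = {}"
    and "\<And>x. x \<in> B1 \<Longrightarrow> phi x = c" "\<And>x. x \<in> B2 \<Longrightarrow> \<bar>phi x\<bar> \<le> L"
  shows "T (\<lambda>x. phi x * (h1 x + h2 x)) = c *\<^sub>R T h1 + T (\<lambda>x. phi x * h2 x)"
proof -
  have p: "0 \<le> p"
    using assms(2) by simp
  have "T (\<lambda>x. phi x * (h1 x + h2 x)) = T (\<lambda>x. c * h1 x + 1 * (phi x * h2 x))"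
  proof (rule bounded_Lp_op_cong_AE[OF assms(1-3)])
    show "(\<lambda>x. phi x * (h1 x + h2 x)) \<in> Lp_space M p"
      using assms(8,9) by (intro mult_sign_Lp_space[OF assms(1) p assms(4) is_sign_add[OF assms(5-7)],
          where L="max \<bar>c\<bar> L"]) fastforce
    show "(\<lambda>x. c * h1 x + 1 * (phi x * h2 x)) \<in> borel_measurable M"
      using is_sign_measurable[OF assms(5)] is_sign_measurable[OF assms(6)] assms(4) by measurable
    have "phi x * (h1 x + h2 x) = c * h1 x + 1 * (phi x * h2 x)" if "x \<in> space M" for x
      using is_sign_outside[OF assms(5) that] is_sign_outside[OF assms(6) that] assms(7,8)
      by (cases "x \<in> B1") (auto simp: distrib_left)
    then show "AE x in M. phi x * (h1 x + h2 x) = c * h1 x + 1 * (phi x * h2 x)"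
      by (rule AE_I2)
  qed
  also have "\<dots> = c *\<^sub>R T h1 + 1 *\<^sub>R T (\<lambda>x. phi x * h2 x)"
    using is_sign_Lp_space[OF assms(1) p assms(5)] mult_sign_Lp_space[OF assms(1) p assms(4,6,9)]
    by (rule bounded_Lp_op_linear[OF assms(3)])
  finally show ?thesis
    by simp
qed

lemma narrow_mult_finite_valued:
  assumes "finite_measure M" "0 < p" "narrow M p T" "phi \<in> borel_measurable M"
    and "finite F" "B \<in> sets M" "phi ` B \<subseteq> F" "0 < \<epsilon>"
  shows "\<exists>h. is_sign M h B \<and> mean_zero M h \<and> norm (T (\<lambda>x. phi x * h x)) < \<epsilon>"
proof -
  have T: "bounded_Lp_op M p T"
    using assms(3) unfolding narrow_def by simp
  show ?thesis
    using assms(5-8)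
  proof (induction F arbitrary: B \<epsilon>)
    case empty
    then have "B = {}"
      by simp
    then have "is_sign M (\<lambda>x. 0) B"
      unfolding is_sign_def by simp
    moreover have "T (\<lambda>x. phi x * 0) = 0"
      by (rule bounded_Lp_op_AE_zero[OF assms(1,2) T]) simp_all
    ultimately show ?case
      using empty.prems(3) by (intro exI[of _ "\<lambda>x. 0"]) (simp add: mean_zero_def)
  next
    case (insert c F)
    obtain L where L: "\<And>x. x \<in> B \<Longrightarrow> \<bar>phi x\<bar> \<le> L"
      using insert.hyps(1) insert.prems(2) finite_imp_bounded[of "insert c F"]
      unfolding bounded_real by blast
    define B1 where "B1 = B \<inter> {x \<in> space M. phi x = c}"
    define B2 where "B2 = B - B1"
    have B: "B1 \<in> sets M" "B2 \<in> sets M" "B1 \<union> B2 = B" "B1 \<inter> B2 = {}"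
      unfolding B2_def B1_def using insert.prems(1) assms(4) by auto
    have "phi ` B2 \<subseteq> F"
      using insert.prems(2) sets.sets_into_space[OF insert.prems(1)] unfolding B2_def B1_def by auto
    then obtain h2 where h2: "is_sign M h2 B2" "mean_zero M h2" "norm (T (\<lambda>x. phi x * h2 x)) < \<epsilon> / 2"
      using insert.IH B(2) insert.prems(3) by (meson half_gt_zero)
    have "0 < \<epsilon> / (2 * (\<bar>c\<bar> + 1))"
      using insert.prems(3) by (simp add: add_pos_nonneg)
    then obtain h1 where h1: "is_sign M h1 B1" "mean_zero M h1" "norm (T h1) < \<epsilon> / (2 * (\<bar>c\<bar> + 1))"
      using narrow_mean_zero_sign[OF assms(1-3) B(1)] by blast
    have "\<bar>c\<bar> * norm (T h1) \<le> (\<bar>c\<bar> + 1) * norm (T h1)"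
      by (simp add: mult_right_mono)
    also have "\<dots> < (\<bar>c\<bar> + 1) * (\<epsilon> / (2 * (\<bar>c\<bar> + 1)))"
      using h1(3) by (intro mult_strict_left_mono) auto
    also have "\<dots> = \<epsilon> / 2"
      by (simp add: field_simps add_pos_nonneg)
    finally have "\<bar>c\<bar> * norm (T h1) < \<epsilon> / 2" .
    moreover have "T (\<lambda>x. phi x * (h1 x + h2 x)) = c *\<^sub>R T h1 + T (\<lambda>x. phi x * h2 x)"
      using L B(3)
      by (intro bounded_Lp_op_mult_disjoint_signs[OF assms(1,2) T assms(4) h1(1) h2(1) B(4)])
        (auto simp: B1_def)
    ultimately have "norm (T (\<lambda>x. phi x * (h1 x + h2 x))) < \<epsilon>"
      using h2(3) norm_triangle_ineq[of "c *\<^sub>R T h1" "T (\<lambda>x. phi x * h2 x)"] by simp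
    moreover have "is_sign M (\<lambda>x. h1 x + h2 x) B"
      using is_sign_add[OF h1(1) h2(1) B(4)] B(3) by simp
    moreover have "mean_zero M (\<lambda>x. h1 x + h2 x)"
      using is_sign_integrable[OF assms(1)] h1 h2 by (intro mean_zero_add) auto
    ultimately show ?case
      by blast
  qed
qed

theorem lemma2p1:
  fixes M :: "'a measure" and p :: real and g :: "'a \<Rightarrow> real"
    and T :: "('a \<Rightarrow> real) \<Rightarrow> 'b::banach"
  assumes "nonatomic M"
    and "0 < emeasure M (space M)" and "emeasure M (space M) < \<infinity>"
    and "1 \<le> p"
    and "g \<in> Linf_space M"
    and "narrow M p T"
  shows "narrow M p (\<lambda>f. T (\<lambda>x. g x * f x))"
proof -
  have M: "finite_measure M"
    using assms(3) by (intro finite_measureI) simp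
  have p: "0 < p" and T: "bounded_Lp_op M p T"
    using assms(4,6) unfolding narrow_def by auto
  obtain K where g: "g \<in> borel_measurable M" "AE x in M. \<bar>g x\<bar> \<le> K"
    using assms(5) unfolding Linf_space_def by auto
  show ?thesis
    unfolding narrow_def
  proof (intro conjI ballI impI allI)
    show "bounded_Lp_op M p (\<lambda>f. T (\<lambda>x. g x * f x))"
      by (rule bounded_Lp_op_mult_Linf[OF p T assms(5)])
    fix A :: "'a set" and \<epsilon> :: real
    assume A: "A \<in> sets M" and "0 < emeasure M A" and "0 < \<epsilon>"
    then obtain \<delta> where "0 < \<delta>" and small:
      "\<And>f. f \<in> borel_measurable M \<Longrightarrow> AE x in M. \<bar>f x\<bar> \<le> \<delta> \<Longrightarrow> norm (T f) < \<epsilon> / 2"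
      using bounded_Lp_op_uniformly_small[OF M p T, of "\<epsilon> / 2"] by auto
    then obtain phi where phi: "phi \<in> borel_measurable M" "finite (phi ` space M)"
      "AE x in M. \<bar>g x - phi x\<bar> \<le> \<delta>"
      using AE_bounded_finite_valued_approx[OF g] by blast
    obtain h where h: "is_sign M h A" "mean_zero M h" "norm (T (\<lambda>x. phi x * h x)) < \<epsilon> / 2"
      using narrow_mult_finite_valued[OF M p assms(6) phi(1,2) A image_mono[OF sets.sets_into_space[OF A]]]
        \<open>0 < \<epsilon>\<close> half_gt_zero by blast
    obtain L where "\<And>x. x \<in> space M \<Longrightarrow> \<bar>phi x\<bar> \<le> L"
      using finite_imp_bounded[OF phi(2)] unfolding bounded_real by blast
    then have main: "(\<lambda>x. phi x * h x) \<in> Lp_space M p"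
      using sets.sets_into_space[OF A] is_sign_measurable[OF h(1)]
      by (intro mult_sign_Lp_space[OF M _ phi(1) h(1)]) (use p in auto)
    have "AE x in M. \<bar>(g x - phi x) * h x\<bar> \<le> \<delta>"
      using phi(3) AE_space
    proof eventually_elim
      case (elim x)
      then show ?case
        using is_sign_abs_mult_le[OF h(1), of x "g x - phi x"] by simp
    qed
    moreover have "(\<lambda>x. (g x - phi x) * h x) \<in> borel_measurable M"
      using g(1) phi(1) is_sign_measurable[OF h(1)] by measurable
    ultimately have error: "(\<lambda>x. (g x - phi x) * h x) \<in> Lp_space M p"
      "norm (T (\<lambda>x. (g x - phi x) * h x)) < \<epsilon> / 2"
      using Lp_space_AE_bounded[OF M] small p by auto
    have "T (\<lambda>x. g x * h x) = T (\<lambda>x. phi x * h x + (g x - phi x) * h x)"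
      by (simp add: algebra_simps)
    also have "\<dots> = T (\<lambda>x. phi x * h x) + T (\<lambda>x. (g x - phi x) * h x)"
      by (rule bounded_Lp_op_add[OF T main error(1)])
    finally have "norm (T (\<lambda>x. g x * h x))
        \<le> norm (T (\<lambda>x. phi x * h x)) + norm (T (\<lambda>x. (g x - phi x) * h x))"
      by (simp add: norm_triangle_ineq)
    then have "norm (T (\<lambda>x. g x * h x)) < \<epsilon>"
      using h(3) error(2) by linarith
    then show "\<exists>h. is_sign M h A \<and> mean_zero M h \<and> norm (T (\<lambda>x. g x * h x)) < \<epsilon>"
      using h(1,2) by blast
  qed
qed

end
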